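(* Fix $n\in\mathbb N$ and $\alpha\in(0,1)$, and let $S_1,\dots,S_M$ be pairwise disjoint measurable subsets of $\mathcal M_{\mathrm{free}}$ with $$\mu(S_m)=\mu(S_1)\ge\left(\frac{2+\log(1/\alpha)}{n}\right)e^2\,\mu(\mathcal M_{\mathrm{free}})\quad\text{for each } m.$$ Let $V$ be a set of $n$ points sampled independently and identically from the uniform distribution on $\mathcal M_{\mathrm{free}}$, and define $K_n:=\#\{m\in\{1,\dots,M\}: S_m\cap V=\emptyset\}$. Then $$\mathbb P(K_n\ge\alpha M)\le\frac{e^{-\alpha M}}{1-e^{-n}}.$$
   Context: $\mathcal M_{\mathrm{free}}\subset\mathbb R^n$ is a measurable set with $0<\mu(\mathcal M_{\mathrm{free}})<\infty$, where $\mu$ denotes Lebesgue measure. *)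

theory Defs
  imports "HOL-Probability.Probability"
begin

definition sample_space :: "nat \<Rightarrow> 'a::euclidean_space set \<Rightarrow> (nat \<Rightarrow> 'a) measure" where
  "sample_space n Mfree = PiM {..<n} (\<lambda>_. uniform_measure lebesgue Mfree)"

definition missed_count :: "nat \<Rightarrow> nat \<Rightarrow> (nat \<Rightarrow> 'a set) \<Rightarrow> (nat \<Rightarrow> 'a) \<Rightarrow> nat" where
  "missed_count n M S v = card {m \<in> {1..M}. S m \<inter> v ` {..<n} = {}}"

end

theory Submission
  imports Defs
begin

text \<open>
  If at least \<open>k\<close> of the sets are missed by the sample, then some \<open>k\<close> of them are missed
  together, i.e. all \<open>n\<close> points avoid a union of probability \<open>k p\<close>, where
  \<open>p = \<mu>(S 1) / \<mu>(Mfree)\<close>. A union bound over the \<open>M choose k\<close> such families bounds the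
  probability by \<open>(M choose k) (1 - k p)^n \<le> (e / \<alpha>)^k exp (- k p n)\<close> for \<open>k = \<lceil>\<alpha> M\<rceil>\<close>, and the
  hypothesis \<open>p n \<ge> (2 + ln (1 / \<alpha>)) e^2\<close> makes this at most \<open>exp (- k) \<le> exp (- \<alpha> M)\<close>.
\<close>

lemma power_div_fact_le_exp:
  fixes x :: real
  assumes "0 \<le> x"
  shows "x ^ k / fact k \<le> exp x"
proof -
  have "(\<Sum>i\<in>{k}. x ^ i /\<^sub>R fact i) \<le> (\<Sum>i. x ^ i /\<^sub>R fact i)"
    using assms by (intro sum_le_suminf) (auto intro: summable_exp)
  then show ?thesis
    using sums_unique[OF exp_converges, of x] by (simp add: divide_inverse_commute)
qed

lemma binomial_le_exp_mult_div_power: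
  assumes "0 < k"
  shows "real (n choose k) \<le> (exp 1 * real n / real k) ^ k"
proof -
  have "real (n choose k) \<le> real n ^ k / fact k"
    using binomial_fact_pow[of n k]
    by (simp add: field_simps) (metis of_nat_fact of_nat_le_iff of_nat_mult of_nat_power)
  also have "\<dots> = (real n / real k) ^ k * (real k ^ k / fact k)"
    using assms by (simp add: power_divide)
  also have "\<dots> \<le> (real n / real k) ^ k * exp (real k)"
    by (intro mult_left_mono power_div_fact_le_exp) auto
  also have "\<dots> = (exp 1 * real n / real k) ^ k"
    using exp_of_nat_mult[of k "1::real"] by (simp add: power_mult_distrib power_divide)
  finally show ?thesis .
qed

lemma binomial_mult_power_le_exp_neg:
  fixes \<alpha> p :: real and n M k :: nat
  assumes "0 < \<alpha>" "\<alpha> \<le> 1" "\<alpha> * M \<le> k" "0 \<le> 1 - k * p"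
    and "0 < k \<Longrightarrow> (2 + ln (1 / \<alpha>)) * exp 2 \<le> p * n"
  shows "real (M choose k) * (1 - k * p) ^ n \<le> exp (- real k)"
proof (cases "k = 0")
  case False
  define L where "L = ln (1 / \<alpha>)"
  have "0 \<le> L"
    using assms(1,2) by (simp add: L_def)
  then have "2 + L \<le> (2 + L) * exp 2"
    by (simp add: mult_le_cancel_left1 one_le_exp_iff)
  with assms(5) False have pn: "2 + L \<le> p * n"
    by (simp add: L_def)
  have "(1 - k * p) ^ n \<le> exp (- k * p) ^ n"
    using assms(4) exp_ge_add_one_self[of "- k * p"] by (intro power_mono) auto
  also have "\<dots> = exp (- k * (p * n))"
    by (simp add: exp_of_nat_mult[symmetric] algebra_simps)
  also have "\<dots> \<le> exp (- k * (2 + L))"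
    using pn by (simp add: mult_left_mono)
  finally have miss: "(1 - k * p) ^ n \<le> exp (- k * (2 + L))" .
  have "real (M choose k) \<le> (exp 1 * M / k) ^ k"
    using False by (intro binomial_le_exp_mult_div_power) simp
  also have "\<dots> \<le> (exp 1 / \<alpha>) ^ k"
    using assms(1,3) False by (intro power_mono) (auto simp: field_simps)
  also have "\<dots> = exp (1 + L) ^ k"
    using assms(1) by (simp add: L_def exp_add)
  also have "\<dots> = exp (k * (1 + L))"
    by (simp add: exp_of_nat_mult)
  finally have choose: "real (M choose k) \<le> exp (k * (1 + L))" .
  have "real (M choose k) * (1 - k * p) ^ n \<le> exp (k * (1 + L)) * exp (- k * (2 + L))"
    using miss choose assms(4) by (intro mult_mono) auto
  also have "\<dots> = exp (- real k)"
    by (simp add: exp_add[symmetric] algebra_simps)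
  finally show ?thesis .
qed simp

lemma (in prob_space) prob_UN_disjoint_equiprobable:
  fixes p :: real
  assumes "finite T" "\<And>m. m \<in> T \<Longrightarrow> S m \<in> events" "disjoint_family_on S T"
    and "\<And>m. m \<in> T \<Longrightarrow> prob (S m) = p"
  shows "prob (\<Union>m\<in>T. S m) = card T * p"
proof -
  have "prob (\<Union>m\<in>T. S m) = (\<Sum>m\<in>T. prob (S m))"
    using assms by (intro finite_measure_finite_Union) auto
  then show ?thesis
    using assms(4) by simp
qed

lemma (in prob_space) measure_PiM_PiE_const:
  assumes "finite I" "A \<in> events"
  shows "measure (PiM I (\<lambda>_. M)) (PiE I (\<lambda>_. A)) = prob A ^ card I"
proof -
  interpret P: prob_space "PiM I (\<lambda>_. M)"
    by (intro prob_space_PiM prob_space_axioms)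
  have "emeasure (PiM I (\<lambda>_. M)) (PiE I (\<lambda>_. A)) = (\<Prod>i\<in>I. emeasure M A)"
    using assms by (intro product_sigma_finite.emeasure_PiM)
      (auto simp: product_sigma_finite_def sigma_finite_measure_axioms)
  then show ?thesis
    by (simp add: P.emeasure_eq_measure emeasure_eq_measure prod_ennreal ennreal_power)
qed

lemma missed_count_ge_obtains_missed_subset:
  assumes "k \<le> missed_count n N S v"
  obtains T where "T \<subseteq> {1..N}" "card T = k" "\<And>i. i < n \<Longrightarrow> v i \<notin> (\<Union>m\<in>T. S m)"
proof -
  obtain T where "T \<subseteq> {m \<in> {1..N}. S m \<inter> v ` {..<n} = {}}" "card T = k"
    using assms unfolding missed_count_def by (meson obtain_subset_with_card_n)
  then show ?thesis
    by (intro that) auto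
qed

lemma (in prob_space) disjoint_equiprobable_mult_le_one:
  fixes p :: real and k N :: nat
  assumes "\<And>m. m \<in> {1..N} \<Longrightarrow> S m \<in> events" "disjoint_family_on S {1..N}"
    and "\<And>m. m \<in> {1..N} \<Longrightarrow> prob (S m) = p" "k \<le> N"
  shows "k * p \<le> 1"
proof -
  have "prob (\<Union>m\<in>{1..k}. S m) = card {1..k} * p"
    using assms disjoint_family_on_mono[OF _ assms(2), of "{1..k}"]
    by (intro prob_UN_disjoint_equiprobable) auto
  then show ?thesis
    using prob_le_1[of "\<Union>m\<in>{1..k}. S m"] by simp
qed

lemma (in prob_space) prob_missed_count_ge_le:
  fixes p :: real
  assumes events: "\<And>m. m \<in> {1..N} \<Longrightarrow> S m \<in> events"
    and disjoint: "disjoint_family_on S {1..N}"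
    and equiprobable: "\<And>m. m \<in> {1..N} \<Longrightarrow> prob (S m) = p"
  shows "measure (PiM {..<n} (\<lambda>_. M))
           {v \<in> space (PiM {..<n} (\<lambda>_. M)). k \<le> missed_count n N S v}
         \<le> (N choose k) * (1 - k * p) ^ n"
proof -
  define P where "P = PiM {..<n} (\<lambda>_. M)"
  interpret P: prob_space P
    unfolding P_def by (intro prob_space_PiM prob_space_axioms)
  define Avoid where "Avoid T = PiE {..<n} (\<lambda>_. space M - (\<Union>m\<in>T. S m))" for T
  define Ts where "Ts = {T. T \<subseteq> {1..N} \<and> card T = k}"
  have avoid: "Avoid T \<in> P.events" "P.prob (Avoid T) = (1 - k * p) ^ n" if "T \<in> Ts" for T
  proof -
    have T: "finite T" "T \<subseteq> {1..N}" "card T = k"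
      using that finite_subset unfolding Ts_def by auto
    have "(\<Union>m\<in>T. S m) \<in> events"
      using T events by (intro sets.finite_UN) auto
    moreover have "prob (\<Union>m\<in>T. S m) = card T * p"
      using T events equiprobable disjoint_family_on_mono[OF T(2) disjoint]
      by (intro prob_UN_disjoint_equiprobable) auto
    ultimately show "Avoid T \<in> P.events" "P.prob (Avoid T) = (1 - k * p) ^ n"
      unfolding Avoid_def P_def using T(3)
      by (auto intro: sets_PiM_I_finite simp: measure_PiM_PiE_const prob_compl)
  qed
  have "{v \<in> space P. k \<le> missed_count n N S v} \<subseteq> (\<Union>T\<in>Ts. Avoid T)"
  proof
    fix v assume v: "v \<in> {v \<in> space P. k \<le> missed_count n N S v}"
    then obtain T where "T \<subseteq> {1..N}" "card T = k" "\<And>i. i < n \<Longrightarrow> v i \<notin> (\<Union>m\<in>T. S m)"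
      by (auto elim: missed_count_ge_obtains_missed_subset)
    moreover have "v \<in> PiE {..<n} (\<lambda>_. space M)"
      using v by (simp add: P_def space_PiM)
    ultimately show "v \<in> (\<Union>T\<in>Ts. Avoid T)"
      unfolding Avoid_def Ts_def by (auto simp: PiE_iff)
  qed
  moreover have "finite Ts"
    unfolding Ts_def by (rule finite_subset[of _ "Pow {1..N}"]) auto
  ultimately have "P.prob {v \<in> space P. k \<le> missed_count n N S v} \<le> (\<Sum>T\<in>Ts. P.prob (Avoid T))"
    using avoid by (intro order.trans[OF P.finite_measure_mono P.finite_measure_subadditive_finite]) auto
  also have "\<dots> = card Ts * (1 - k * p) ^ n"
    using avoid by simp
  also have "card Ts = N choose k"
    unfolding Ts_def using n_subsets[of "{1..N}" k] by simp
  finally show ?thesis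
    unfolding P_def .
qed

theorem lemma4:
  fixes Mfree :: "'a::euclidean_space set"
    and S :: "nat \<Rightarrow> 'a set"
    and n M :: nat and \<alpha> :: real
  assumes "Mfree \<in> sets lebesgue"
    and "0 < emeasure lebesgue Mfree" and "emeasure lebesgue Mfree < \<infinity>"
    and "n \<ge> 1"
    and "0 < \<alpha>" and "\<alpha> < 1"
    and "\<And>m. m \<in> {1..M} \<Longrightarrow> S m \<in> sets lebesgue"
    and "\<And>m. m \<in> {1..M} \<Longrightarrow> S m \<subseteq> Mfree"
    and "disjoint_family_on S {1..M}"
    and "\<And>m. m \<in> {1..M} \<Longrightarrow> measure lebesgue (S m) = measure lebesgue (S 1)"
    and "\<And>m. m \<in> {1..M} \<Longrightarrow>
           measure lebesgue (S m) \<ge> ((2 + ln (1 / \<alpha>)) / real n) * exp 2 * measure lebesgue Mfree"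
  shows "measure (sample_space n Mfree)
           {v \<in> space (sample_space n Mfree). real (missed_count n M S v) \<ge> \<alpha> * real M}
         \<le> exp (- \<alpha> * real M) / (1 - exp (- real n))"
proof -
  define u where "u = uniform_measure lebesgue Mfree"
  define p where "p = measure lebesgue (S 1) / measure lebesgue Mfree"
  define k where "k = nat \<lceil>\<alpha> * M\<rceil>"
  have Mfree: "emeasure lebesgue Mfree \<noteq> 0" "emeasure lebesgue Mfree \<noteq> \<infinity>" "0 < measure lebesgue Mfree"
    using assms(2,3) by (auto simp: measure_def enn2real_positive_iff)
  interpret u: prob_space u
    unfolding u_def using Mfree by (intro prob_space_uniform_measure)
  have prob_S: "u.prob (S m) = p" if "m \<in> {1..M}" for m
  proof -
    have "u.prob (S m) = measure lebesgue (Mfree \<inter> S m) / measure lebesgue Mfree"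
      unfolding u_def using Mfree(1,2) assms(7)[OF that] by (rule measure_uniform_measure)
    then show ?thesis
      using assms(8,10)[OF that] by (simp add: p_def Int_absorb1)
  qed
  have events: "S m \<in> u.events" if "m \<in> {1..M}" for m
    using that assms(7) by (simp add: u_def)
  have k: "\<alpha> * M \<le> k" "k \<le> M"
    using assms(5,6) mult_left_le_one_le[of M \<alpha>]
    by (simp_all add: k_def real_nat_ceiling_ge nat_le_iff ceiling_le_iff)
  have sample_size: "(2 + ln (1 / \<alpha>)) * exp 2 \<le> p * n" if "0 < k"
  proof -
    have "(2 + ln (1 / \<alpha>)) / n * exp 2 * measure lebesgue Mfree \<le> p * measure lebesgue Mfree"
      using assms(11)[of 1] that k(2) Mfree(3) by (simp add: p_def)
    then have "(2 + ln (1 / \<alpha>)) / n * exp 2 \<le> p"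
      using Mfree(3) by (rule mult_right_le_imp_le)
    then show ?thesis
      using assms(4) by (simp add: field_simps)
  qed
  have "measure (sample_space n Mfree)
      {v \<in> space (sample_space n Mfree). real (missed_count n M S v) \<ge> \<alpha> * real M}
      = measure (PiM {..<n} (\<lambda>_. u)) {v \<in> space (PiM {..<n} (\<lambda>_. u)). k \<le> missed_count n M S v}"
    by (simp add: sample_space_def u_def k_def nat_le_iff ceiling_le_iff)
  also have "\<dots> \<le> (M choose k) * (1 - k * p) ^ n"
    by (rule u.prob_missed_count_ge_le[OF events assms(9) prob_S])
  also have "\<dots> \<le> exp (- real k)"
    using assms(5,6) k u.disjoint_equiprobable_mult_le_one[OF events assms(9) prob_S k(2)] sample_size
    by (intro binomial_mult_power_le_exp_neg) auto
  also have "\<dots> \<le> exp (- \<alpha> * M)"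
    using k(1) by simp
  also have "\<dots> \<le> exp (- \<alpha> * real M) / (1 - exp (- real n))"
    using assms(4) by (simp add: le_divide_eq)
  finally show ?thesis .
qed

end
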